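(* Let $D,\chi,\varepsilon,a>0$ and $\beta>0$, set $b=D\beta^2$, and assume $\omega^2:=\frac{a\chi}{D\varepsilon}-\beta^2>0$. Then there exist $\rho_0>0$, $\phi_0>0$, $r_0>0$ and functions $\rho\in C^0[0,\infty)$, $\phi\in C^2[0,\infty)$ with $\rho\ge 0$, $\phi\ge 0$, $\phi$ bounded, such that the function $p(\rho)=\frac{\varepsilon}{2}\rho^2$ is differentiable on $(0,\infty)$ and $$\partial_r\big(p(\rho)\big)=\chi\rho\,\phi_r,\qquad D\phi_{rr}+D\frac{\phi_r}{r}+a\rho-b\phi=0\quad\text{on }(0,\infty),$$ and moreover $\rho(0)=\rho_0$, $\phi(0)=\phi_0$, $\rho>0$ on $[0,r_0)$ and $\rho\equiv 0$ on $[r_0,\infty)$ (a "half bump" solution).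
   Context: This system is the radially symmetric stationary form (with zero velocity) of the hyperbolic-parabolic chemotaxis model $\rho_t+\mathrm{div}(\rho u)=0$, $(\rho u)_t+\mathrm{div}(\rho u\otimes u)+\nabla p(\rho)=\chi\rho\nabla\phi-\alpha\rho u$, $\delta\phi_t=D\Delta\phi+a\rho-b\phi$ on $\mathbb{R}^2$ with pressure $p(\rho)=\frac{\varepsilon}{2}\rho^2$; here $r=|x|$, $\rho(r)$ is cell density and $\phi(r)$ chemoattractant concentration. *)

theory Defs
  imports "HOL-Analysis.Analysis"
begin

end

(*
  Inside the support, the balance of pressure and chemotactic force gives
  rho = chi / eps * (phi - 1) after normalising phi = 1 at the edge r0, and the phi-equation
  becomes phi'' + phi' / r + w^2 phi = kappa with kappa = a chi / (D eps) and w^2 = kappa - beta^2: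
  phi = A J_0(w r) + kappa / w^2. Outside, rho = 0 and phi = B K_0(beta r).
  Between the first zero z of J_0(w r) and its first critical point y, the function
  J_0 K_0' + (beta^2 / w^2) J_0' K_0 changes sign, so it vanishes at some r0 in (z, y].
  There J_0 < 0, so A, B > 0 are fixed by phi(r0) = 1 on both sides, the vanishing makes phi C^1,
  and the two equations then agree on phi'' at r0. Both Bessel functions are power series
  in u = r^2/4, and K_0 is obtained from I_0 by reduction of order.
*)

theory Submission
  imports Defs
begin

section \<open>Power series of Bessel type\<close>

definition bessel_coeff :: "real \<Rightarrow> nat \<Rightarrow> real" where
  "bessel_coeff c k = c ^ k / (fact k)\<^sup>2"

text \<open>\<open>bessel0 (-1) (x\<^sup>2 / 4) = J\<^sub>0 x\<close> and \<open>bessel0 1 (x\<^sup>2 / 4) = I\<^sub>0 x\<close>.\<close>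

definition bessel0 :: "real \<Rightarrow> real \<Rightarrow> real" where
  "bessel0 c u = (\<Sum>k. bessel_coeff c k * u ^ k)"

definition bessel0' :: "real \<Rightarrow> real \<Rightarrow> real" where
  "bessel0' c u = (\<Sum>k. diffs (bessel_coeff c) k * u ^ k)"

definition bessel0'' :: "real \<Rightarrow> real \<Rightarrow> real" where
  "bessel0'' c u = (\<Sum>k. diffs (diffs (bessel_coeff c)) k * u ^ k)"

lemma summable_bessel_coeff: "summable (\<lambda>k. bessel_coeff c k * u ^ k)"
proof (rule summable_comparison_test)
  show "summable (\<lambda>k. inverse (fact k) * \<bar>c * u\<bar> ^ k)"
    by (rule summable_exp)
  have "norm (bessel_coeff c k * u ^ k) \<le> inverse (fact k) * \<bar>c * u\<bar> ^ k" for k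
  proof -
    have "norm (bessel_coeff c k * u ^ k) = \<bar>c * u\<bar> ^ k / (fact k * fact k)"
      by (simp add: bessel_coeff_def abs_mult power_abs power_mult_distrib power2_eq_square)
    also have "\<dots> \<le> \<bar>c * u\<bar> ^ k / fact k"
      by (intro divide_left_mono) auto
    finally show ?thesis
      by (simp add: field_simps)
  qed
  then show "\<exists>N. \<forall>k\<ge>N. norm (bessel_coeff c k * u ^ k) \<le> inverse (fact k) * \<bar>c * u\<bar> ^ k"
    by blast
qed

lemma summable_diffs_bessel_coeff: "summable (\<lambda>k. diffs (bessel_coeff c) k * u ^ k)"
  by (rule termdiff_converges_all) (rule summable_bessel_coeff)

lemma summable_diffs2_bessel_coeff: "summable (\<lambda>k. diffs (diffs (bessel_coeff c)) k * u ^ k)"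
  by (rule termdiff_converges_all) (rule summable_diffs_bessel_coeff)

lemma bessel0_has_real_derivative: "(bessel0 c has_real_derivative bessel0' c u) (at u)"
  unfolding bessel0_def [abs_def] bessel0'_def
  by (rule termdiffs_strong_converges_everywhere) (rule summable_bessel_coeff)

lemma bessel0'_has_real_derivative: "(bessel0' c has_real_derivative bessel0'' c u) (at u)"
  unfolding bessel0'_def [abs_def] bessel0''_def
  by (rule termdiffs_strong_converges_everywhere) (rule summable_diffs_bessel_coeff)

lemma isCont_bessel0: "isCont (bessel0 c) u"
  by (rule DERIV_isCont [OF bessel0_has_real_derivative])

lemma isCont_bessel0': "isCont (bessel0' c) u"
  by (rule DERIV_isCont [OF bessel0'_has_real_derivative])

lemma isCont_bessel0'': "isCont (bessel0'' c) u"
  unfolding bessel0''_def [abs_def]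
  by (rule isCont_powser_converges_everywhere) (rule summable_diffs2_bessel_coeff)

lemma bessel0_at_0 [simp]: "bessel0 c 0 = 1"
  using powser_zero [of "bessel_coeff c"] by (simp add: bessel0_def bessel_coeff_def)

lemma bessel0'_at_0 [simp]: "bessel0' c 0 = c"
  using powser_zero [of "diffs (bessel_coeff c)"] by (simp add: bessel0'_def bessel_coeff_def diffs_def)

lemma diffs_bessel_coeff: "diffs (bessel_coeff c) k = c ^ Suc k / (fact k * fact (Suc k))"
  by (simp add: diffs_def bessel_coeff_def power2_eq_square field_simps del: of_nat_Suc)

lemma bessel0_ode: "u * bessel0'' c u + bessel0' c u = c * bessel0 c u"
proof -
  let ?a = "bessel_coeff c" and ?d1 = "diffs (bessel_coeff c)" and ?d2 = "diffs (diffs (bessel_coeff c))"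
  have coeff: "?d2 k + ?d1 (Suc k) = c * ?a (Suc k)" for k
  proof -
    have "?d2 k + ?d1 (Suc k) = real (Suc (Suc k)) ^ 2 * ?a (Suc (Suc k))"
      by (simp add: diffs_def power2_eq_square algebra_simps)
    also have "\<dots> = c * ?a (Suc k)"
      unfolding bessel_coeff_def fact_Suc [of "Suc k"] by (simp add: power_mult_distrib)
    finally show ?thesis .
  qed
  have s0: "summable (\<lambda>k. ?a (Suc k) * u ^ Suc k)"
    using summable_ignore_initial_segment [OF summable_bessel_coeff [of c u], of 1] by simp
  have s1: "summable (\<lambda>k. ?d1 (Suc k) * u ^ Suc k)"
    using summable_ignore_initial_segment [OF summable_diffs_bessel_coeff [of c u], of 1] by simp
  have s2: "summable (\<lambda>k. ?d2 k * u ^ Suc k)"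
    using summable_mult [OF summable_diffs2_bessel_coeff, of u] by (simp add: algebra_simps)
  have "u * bessel0'' c u = (\<Sum>k. ?d2 k * u ^ Suc k)"
    unfolding bessel0''_def using suminf_mult [OF summable_diffs2_bessel_coeff, of u]
    by (simp add: algebra_simps)
  moreover have "bessel0' c u = ?d1 0 + (\<Sum>k. ?d1 (Suc k) * u ^ Suc k)"
    unfolding bessel0'_def using suminf_split_head [OF summable_diffs_bessel_coeff] by simp
  moreover have "bessel0 c u = ?a 0 + (\<Sum>k. ?a (Suc k) * u ^ Suc k)"
    unfolding bessel0_def using suminf_split_head [OF summable_bessel_coeff] by simp
  moreover have "(\<Sum>k. ?d2 k * u ^ Suc k) + (\<Sum>k. ?d1 (Suc k) * u ^ Suc k)
      = c * (\<Sum>k. ?a (Suc k) * u ^ Suc k)"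
    using coeff suminf_add [OF s2 s1] suminf_mult [OF s0, of c]
    by (simp add: distrib_right [symmetric] mult.assoc)
  moreover have "?d1 0 = c * ?a 0"
    by (simp add: diffs_def bessel_coeff_def)
  ultimately show ?thesis
    by (simp add: distrib_left)
qed

lemma bessel0_one_ge: "u \<ge> 0 \<Longrightarrow> 1 + u \<le> bessel0 1 u"
  using sum_le_suminf [OF summable_bessel_coeff, of "{..<2}" 1 u]
  by (simp add: bessel0_def bessel_coeff_def numeral_2_eq_2)

text \<open>The first zero of \<open>bessel0' (-1)\<close> is \<open>j\<^sup>2 / 4 \<approx> 3.67\<close>, where \<open>j\<close> is the first zero of \<open>J\<^sub>1\<close>.\<close>

lemma bessel0'_minus_one_at_5_pos: "bessel0' (-1) 5 > 0"
proof -
  define b where "b k = (5::real) ^ k / (fact k * fact (Suc k))" for k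
  have alt: "diffs (bessel_coeff (-1)) k * 5 ^ k = - ((-1) ^ k * b k)" for k
    by (simp add: diffs_bessel_coeff b_def [abs_def])
  have sb: "summable b"
    using summable_diffs_bessel_coeff [of 1 5] by (simp add: diffs_bessel_coeff b_def [abs_def])
  have sa: "summable (\<lambda>k. (-1) ^ k * b k)"
    using summable_minus [OF summable_diffs_bessel_coeff [of "-1" 5]] unfolding alt by simp
  define t where "t k = b (k + 2)" for k
  have "bessel0' (-1) 5 = - (\<Sum>k. (-1) ^ k * b k)"
    unfolding bessel0'_def alt using suminf_minus [OF sa] by simp
  also have "(\<Sum>k. (-1) ^ k * b k) = (\<Sum>k. (-1) ^ k * t k) - 3 / 2"
    using suminf_split_initial_segment [OF sa, of 2] by (simp add: t_def b_def numeral_2_eq_2)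
  finally have split: "bessel0' (-1) 5 = 3 / 2 - (\<Sum>k. (-1) ^ k * t k)"
    by simp
  have t_lim: "t \<longlonglongrightarrow> 0"
    unfolding t_def using LIMSEQ_ignore_initial_segment [OF summable_LIMSEQ_zero [OF sb], of 2] .
  have t_nonneg: "0 \<le> t k" for k
    by (simp add: t_def b_def)
  have t_decr: "t (Suc k) \<le> t k" for k
  proof -
    have "t (Suc k) = t k * (5 / ((real k + 3) * (real k + 4)))"
      by (simp add: t_def b_def field_simps)
    also have "\<dots> \<le> t k * 1"
    proof (rule mult_left_mono)
      have "(3::real) * 4 \<le> (real k + 3) * (real k + 4)"
        by (rule mult_mono) auto
      then show "5 / ((real k + 3) * (real k + 4)) \<le> 1"
        by simp
    qed (rule t_nonneg)
    finally show ?thesis by simp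
  qed
  \<comment> \<open>Leibniz: an alternating series is bounded above by its partial sums of odd length.\<close>
  have "(\<Sum>k. (-1) ^ k * t k) \<le> (\<Sum>k<2 * 2 + 1. (-1) ^ k * t k)"
    using summable_Leibniz'(4) [OF t_lim t_nonneg t_decr] .
  also have "\<dots> = 25/12 - 125/144 + 625/2880 - 3125/86400 + 15625/3628800"
    by (simp add: t_def b_def lessThan_Suc numeral_eq_Suc)
  finally show ?thesis
    using split by simp
qed

lemma continuous_on_bessel0 [continuous_intros]: "continuous_on S (bessel0 c)"
  by (rule continuous_at_imp_continuous_on) (use isCont_bessel0 in blast)

lemma continuous_on_bessel0' [continuous_intros]: "continuous_on S (bessel0' c)"
  by (rule continuous_at_imp_continuous_on) (use isCont_bessel0' in blast)

lemma bessel0'_minus_one_first_zero: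
  obtains u1 where "u1 > 0" "bessel0' (-1) u1 = 0"
    "\<And>u. 0 \<le> u \<Longrightarrow> u < u1 \<Longrightarrow> bessel0' (-1) u < 0"
proof -
  define Z where "Z = {0..} \<inter> bessel0' (-1) -` {0}"
  have "\<exists>u\<ge>0. u \<le> 5 \<and> bessel0' (-1) u = 0"
    by (rule IVT') (use bessel0'_minus_one_at_5_pos continuous_on_bessel0' in auto)
  then have "Z \<noteq> {}"
    unfolding Z_def by auto
  moreover have Z_bdd: "bdd_below Z"
    unfolding Z_def by (rule bdd_belowI [of _ 0]) auto
  moreover have "closed Z"
    unfolding Z_def by (intro closed_Int closed_atLeast closed_vimage continuous_on_bessel0' closed_singleton)
  ultimately have "Inf Z \<in> Z"
    by (rule closed_contains_Inf)
  then have zero: "bessel0' (-1) (Inf Z) = 0" and "Inf Z \<ge> 0"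
    unfolding Z_def by auto
  then have pos: "Inf Z > 0"
    by (cases "Inf Z = 0") auto
  have neg: "bessel0' (-1) u < 0" if "0 \<le> u" "u < Inf Z" for u
  proof (rule ccontr)
    assume "\<not> bessel0' (-1) u < 0"
    then have "\<exists>v\<ge>0. v \<le> u \<and> bessel0' (-1) v = 0"
      by (intro IVT') (use that continuous_on_bessel0' in auto)
    then obtain v where "0 \<le> v" "v \<le> u" "bessel0' (-1) v = 0"
      by blast
    then have "Inf Z \<le> v"
      unfolding Z_def by (intro cInf_lower Z_bdd) auto
    with \<open>v \<le> u\<close> that show False by simp
  qed
  show ?thesis
    by (rule that [OF pos zero neg])
qed

lemma bessel0_minus_one_strict_decreasing:
  assumes "\<And>u. 0 \<le> u \<Longrightarrow> u < u1 \<Longrightarrow> bessel0' (-1) u < 0" "0 \<le> s" "s < t" "t \<le> u1"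
  shows "bessel0 (-1) t < bessel0 (-1) s"
  by (rule DERIV_neg_imp_decreasing_open [OF \<open>s < t\<close>])
     (use assms bessel0_has_real_derivative continuous_on_bessel0 in force)+

lemma bessel0_minus_one_neg_at_first_zero:
  assumes "u1 > 0" "bessel0' (-1) u1 = 0"
    and neg: "\<And>u. 0 \<le> u \<Longrightarrow> u < u1 \<Longrightarrow> bessel0' (-1) u < 0"
  shows "bessel0 (-1) u1 < 0"
proof (rule ccontr)
  assume "\<not> bessel0 (-1) u1 < 0"
  then have pos: "bessel0 (-1) u > 0" if "0 \<le> u" "u < u1" for u
    using bessel0_minus_one_strict_decreasing [OF neg that order.refl] by simp
  \<comment> \<open>By the differential equation, \<open>(u G')' = - G\<close>.\<close>
  define w where "w u = u * bessel0' (-1) u" for u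
  have w_deriv: "(w has_real_derivative - bessel0 (-1) u) (at u)" for u
    using DERIV_mult [OF DERIV_ident bessel0'_has_real_derivative, of "-1" u] bessel0_ode [of u "-1"]
    unfolding w_def [abs_def] by (simp add: algebra_simps)
  have "w u1 < w 0"
  proof (rule DERIV_neg_imp_decreasing_open [OF \<open>u1 > 0\<close>])
    fix u assume "0 < u" "u < u1"
    then show "\<exists>y. (w has_real_derivative y) (at u) \<and> y < 0"
      using w_deriv pos [of u] by force
  next
    show "continuous_on {0..u1} w"
      unfolding w_def by (intro continuous_intros)
  qed
  then show False
    using assms(2) by (simp add: w_def)
qed

lemma bessel0_one_ge_one: "u \<ge> 0 \<Longrightarrow> 1 \<le> bessel0 1 u"
  using bessel0_one_ge [of u] by simp

lemma mult_bessel0'_one_strict_mono: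
  assumes "0 \<le> s" "s < t"
  shows "s * bessel0' 1 s < t * bessel0' 1 t"
proof (rule DERIV_pos_imp_increasing_open [OF \<open>s < t\<close>])
  fix u assume "s < u" "u < t"
  have "((\<lambda>u. u * bessel0' 1 u) has_real_derivative bessel0 1 u) (at u)"
    using DERIV_mult [OF DERIV_ident bessel0'_has_real_derivative, of 1 u] bessel0_ode [of u 1]
    by (simp add: algebra_simps)
  moreover have "bessel0 1 u > 0"
    using bessel0_one_ge_one [of u] \<open>s < u\<close> assms by simp
  ultimately show "\<exists>y. ((\<lambda>u. u * bessel0' 1 u) has_real_derivative y) (at u) \<and> y > 0"
    by blast
qed (intro continuous_intros)

lemma bessel0'_one_pos: "u > 0 \<Longrightarrow> bessel0' 1 u > 0"
  using mult_bessel0'_one_strict_mono [of 0 u] by (simp add: zero_less_mult_iff)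

section \<open>A decaying second solution\<close>

definition reduction_weight :: "real \<Rightarrow> real" where
  "reduction_weight s = 1 / (s * (bessel0 1 s)\<^sup>2)"

definition reduction_integral :: "real \<Rightarrow> real" where
  "reduction_integral u = integral {u..} reduction_weight"

lemma reduction_weight_pos: "s > 0 \<Longrightarrow> reduction_weight s > 0"
  using bessel0_one_ge_one [of s] by (simp add: reduction_weight_def)

lemma reduction_weight_le:
  assumes "s > 0"
  shows "reduction_weight s \<le> s powr -2"
proof -
  have "s \<le> (1 + s)\<^sup>2"
    using assms mult_nonneg_nonneg [of s s] by (simp add: power2_eq_square algebra_simps)
  also have "\<dots> \<le> (bessel0 1 s)\<^sup>2"
    using bessel0_one_ge [of s] assms by (intro power_mono) auto
  finally have "s * s \<le> s * (bessel0 1 s)\<^sup>2"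
    using assms by simp
  then have "1 / (s * (bessel0 1 s)\<^sup>2) \<le> 1 / (s * s)"
    using assms bessel0_one_ge_one [of s] by (intro divide_left_mono) auto
  then show ?thesis
    using assms by (simp add: reduction_weight_def powr_minus powr_realpow power2_eq_square divide_inverse)
qed

lemma continuous_on_reduction_weight: "0 < a \<Longrightarrow> continuous_on {a..} reduction_weight"
  unfolding reduction_weight_def
proof (intro continuous_intros ballI)
  fix s assume "0 < a" "s \<in> {a..}"
  then show "s * (bessel0 1 s)\<^sup>2 \<noteq> 0"
    using bessel0_one_ge_one [of s] by auto
qed

lemma continuous_on_reduction_weight_interval: "0 < a \<Longrightarrow> continuous_on {a..b} reduction_weight"
  by (rule continuous_on_subset [OF continuous_on_reduction_weight]) auto

lemma reduction_weight_integrable: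
  assumes "u > 0"
  shows "reduction_weight integrable_on {u..}"
proof (rule measurable_bounded_by_integrable_imp_integrable)
  show "reduction_weight \<in> borel_measurable (lebesgue_on {u..})"
    using continuous_on_reduction_weight [OF assms] by (rule continuous_imp_measurable_on_sets_lebesgue) simp
  show "(\<lambda>s. s powr -2) integrable_on {u..}"
    using has_integral_powr_to_inf [of "-2" u] assms by (auto intro: has_integral_integrable)
  fix s assume "s \<in> {u..}"
  then show "norm (reduction_weight s) \<le> s powr -2"
    using assms reduction_weight_pos [of s] reduction_weight_le [of s] by simp
qed simp

lemma reduction_integral_split:
  assumes "0 < u" "u \<le> v"
  shows "reduction_integral u = integral {u..v} reduction_weight + reduction_integral v"
proof -
  have "(reduction_weight has_integral integral {u..v} reduction_weight) {u..v}"
    using integrable_continuous_interval [OF continuous_on_reduction_weight_interval [OF assms(1)]]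
    by (simp add: has_integral_integral)
  moreover have "(reduction_weight has_integral reduction_integral v) {v..}"
    unfolding reduction_integral_def using reduction_weight_integrable [of v] assms
    by (simp add: has_integral_integral)
  moreover have "{u..v} \<inter> {v..} = {v}"
    using assms by auto
  then have "negligible ({u..v} \<inter> {v..})"
    by simp
  ultimately have "(reduction_weight has_integral integral {u..v} reduction_weight + reduction_integral v)
      ({u..v} \<union> {v..})"
    by (rule has_integral_Un)
  moreover have "{u..v} \<union> {v..} = {u..}"
    using assms by auto
  ultimately show ?thesis
    unfolding reduction_integral_def by (simp add: integral_unique)
qed

lemma reduction_integral_has_real_derivative:
  assumes "u > 0"
  shows "(reduction_integral has_real_derivative - reduction_weight u) (at u)"
proof -
  have "((\<lambda>v. integral {u/2..v} reduction_weight) has_real_derivative reduction_weight u)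
      (at u within {u/2..2*u})"
    by (rule integral_has_real_derivative [OF continuous_on_reduction_weight_interval]) (use assms in auto)
  then have "((\<lambda>v. integral {u/2..v} reduction_weight) has_real_derivative reduction_weight u) (at u)"
    using at_within_Icc_at [of "u/2" u "2*u"] assms by simp
  then have "((\<lambda>v. reduction_integral (u/2) - integral {u/2..v} reduction_weight)
      has_real_derivative - reduction_weight u) (at u)"
    using DERIV_diff [OF DERIV_const] by fastforce
  then show ?thesis
  proof (rule has_field_derivative_transform_within_open [where S = "{u/2<..}"])
    fix v assume "v \<in> {u/2<..}"
    then show "reduction_integral (u/2) - integral {u/2..v} reduction_weight = reduction_integral v"
      using reduction_integral_split [of "u/2" v] assms by simp
  qed (use assms in auto)
qed

lemma reduction_integral_nonneg: "u > 0 \<Longrightarrow> reduction_integral u \<ge> 0"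
  unfolding reduction_integral_def
  by (rule integral_nonneg [OF reduction_weight_integrable])
     (auto intro: less_imp_le reduction_weight_pos order_less_le_trans)

lemma reduction_integral_pos:
  assumes "u > 0"
  shows "reduction_integral u > 0"
proof -
  have "reduction_integral (u + 1) < reduction_integral u"
  proof (rule DERIV_neg_imp_decreasing [of u "u + 1"])
    fix v assume "u \<le> v"
    with assms have "(reduction_integral has_real_derivative - reduction_weight v) (at v)"
      and "- reduction_weight v < 0"
      using reduction_integral_has_real_derivative reduction_weight_pos by auto
    then show "\<exists>y. (reduction_integral has_real_derivative y) (at v) \<and> y < 0"
      by blast
  qed simp
  with reduction_integral_nonneg [of "u + 1"] assms show ?thesis
    by simp
qed

lemma reduction_integral_le_inverse:
  assumes "v > 0"
  shows "reduction_integral v \<le> 1 / v"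
proof -
  have pow: "((\<lambda>s. s powr -2) has_integral 1 / v) {v..}"
    using has_integral_powr_to_inf [of "-2" v] assms by (simp add: powr_minus_divide)
  have "reduction_integral v \<le> integral {v..} (\<lambda>s. s powr -2)"
    unfolding reduction_integral_def
    by (rule integral_le [OF reduction_weight_integrable [OF assms] has_integral_integrable [OF pow]])
       (use assms reduction_weight_le in auto)
  then show ?thesis
    using integral_unique [OF pow] by simp
qed

lemma integral_reduction_weight_le:
  assumes "0 < u" "u \<le> v"
  shows "integral {u..v} reduction_weight \<le> 1 / (u * bessel0' 1 u * bessel0 1 u)"
proof -
  define P where "P = u * bessel0' 1 u"
  have "P > 0"
    unfolding P_def using assms bessel0'_one_pos [of u] by simp
  \<comment> \<open>\<open>s G'(s)\<close> increases, so the weight is at most \<open>h = - (1 / (P G))'\<close> on \<open>[u, v]\<close>.\<close>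
  define h where "h s = bessel0' 1 s / (P * (bessel0 1 s)\<^sup>2)" for s
  have h_int: "(h has_integral (- 1 / (P * bessel0 1 v)) - (- 1 / (P * bessel0 1 u))) {u..v}"
  proof (rule fundamental_theorem_of_calculus [OF \<open>u \<le> v\<close>])
    fix s assume "s \<in> {u..v}"
    then have "bessel0 1 s \<ge> 1"
      using assms bessel0_one_ge_one [of s] by simp
    then have "((\<lambda>s. - 1 / (P * bessel0 1 s)) has_real_derivative
        (0 * (P * bessel0 1 s) - (- 1) * (P * bessel0' 1 s)) / ((P * bessel0 1 s) * (P * bessel0 1 s))) (at s)"
      using \<open>P > 0\<close> by (intro DERIV_divide DERIV_const DERIV_cmult bessel0_has_real_derivative) auto
    then have "((\<lambda>s. - 1 / (P * bessel0 1 s)) has_real_derivative h s) (at s)"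
      using \<open>P > 0\<close> by (simp add: h_def power2_eq_square mult_ac)
    then show "((\<lambda>s. - 1 / (P * bessel0 1 s)) has_vector_derivative h s) (at s within {u..v})"
      by (simp add: has_real_derivative_iff_has_vector_derivative [symmetric] has_field_derivative_at_within)
  qed
  have "integral {u..v} reduction_weight \<le> integral {u..v} h"
  proof (rule integral_le)
    show "reduction_weight integrable_on {u..v}"
      by (rule integrable_continuous_interval [OF continuous_on_reduction_weight_interval [OF assms(1)]])
    show "h integrable_on {u..v}"
      using h_int by (rule has_integral_integrable)
    fix s assume s: "s \<in> {u..v}"
    then have "P \<le> s * bessel0' 1 s"
      unfolding P_def using mult_bessel0'_one_strict_mono [of u s] assms by (cases "u = s") auto
    then have "1 / s \<le> bessel0' 1 s / P"
      using s assms \<open>P > 0\<close> by (simp add: field_simps)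
    then have "(1 / s) / (bessel0 1 s)\<^sup>2 \<le> (bessel0' 1 s / P) / (bessel0 1 s)\<^sup>2"
      by (rule divide_right_mono) simp
    then show "reduction_weight s \<le> h s"
      by (simp add: reduction_weight_def h_def)
  qed
  also have "\<dots> \<le> 1 / (P * bessel0 1 u)"
    using integral_unique [OF h_int] \<open>P > 0\<close> bessel0_one_ge_one [of v] assms by simp
  finally show ?thesis
    by (simp add: P_def)
qed

lemma reduction_integral_le:
  assumes "u > 0"
  shows "reduction_integral u \<le> 1 / (u * bessel0' 1 u * bessel0 1 u)"
proof (rule field_le_epsilon)
  fix e :: real assume "e > 0"
  define v where "v = max u (1 / e)"
  have "u \<le> v" "v > 0" "1 / e \<le> v"
    using assms by (auto simp: v_def)
  then have "1 / v \<le> e"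
    using \<open>e > 0\<close> by (simp add: field_simps)
  have "reduction_integral u = integral {u..v} reduction_weight + reduction_integral v"
    using reduction_integral_split [OF assms \<open>u \<le> v\<close>] .
  also have "\<dots> \<le> 1 / (u * bessel0' 1 u * bessel0 1 u) + e"
    using integral_reduction_weight_le [OF assms \<open>u \<le> v\<close>] reduction_integral_le_inverse [OF \<open>v > 0\<close>]
      \<open>1 / v \<le> e\<close>
    by simp
  finally show "reduction_integral u \<le> 1 / (u * bessel0' 1 u * bessel0 1 u) + e" .
qed

text \<open>Reduction of order: \<open>bessel0_second (x\<^sup>2 / 4) = 2 K\<^sub>0 x\<close>.\<close>

definition bessel0_second :: "real \<Rightarrow> real" where
  "bessel0_second u = bessel0 1 u * reduction_integral u"

definition bessel0_second' :: "real \<Rightarrow> real" where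
  "bessel0_second' u = bessel0' 1 u * reduction_integral u - 1 / (u * bessel0 1 u)"

definition bessel0_second'' :: "real \<Rightarrow> real" where
  "bessel0_second'' u = bessel0'' 1 u * reduction_integral u + 1 / (u\<^sup>2 * bessel0 1 u)"

lemma bessel0_second_has_real_derivative:
  assumes "u > 0"
  shows "(bessel0_second has_real_derivative bessel0_second' u) (at u)"
proof -
  have "(bessel0_second has_real_derivative
      bessel0 1 u * - reduction_weight u + bessel0' 1 u * reduction_integral u) (at u)"
    unfolding bessel0_second_def [abs_def]
    by (rule DERIV_mult' [OF bessel0_has_real_derivative reduction_integral_has_real_derivative [OF assms]])
  moreover have "bessel0 1 u * - reduction_weight u + bessel0' 1 u * reduction_integral u = bessel0_second' u"
    using bessel0_one_ge_one [of u] assms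
    by (simp add: bessel0_second'_def reduction_weight_def field_simps power2_eq_square)
  ultimately show ?thesis
    by simp
qed

lemma bessel0_second'_has_real_derivative:
  assumes "u > 0"
  shows "(bessel0_second' has_real_derivative bessel0_second'' u) (at u)"
proof -
  have G: "bessel0 1 u \<ge> 1"
    using bessel0_one_ge_one assms by simp
  have "((\<lambda>u. u * bessel0 1 u) has_real_derivative 1 * bessel0 1 u + u * bessel0' 1 u) (at u)"
    using DERIV_mult' [OF DERIV_ident bessel0_has_real_derivative [of 1 u]] by (simp add: algebra_simps)
  then have "((\<lambda>u. 1 / (u * bessel0 1 u)) has_real_derivative
      (0 * (u * bessel0 1 u) - 1 * (1 * bessel0 1 u + u * bessel0' 1 u)) / ((u * bessel0 1 u) * (u * bessel0 1 u)))
      (at u)"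
    using G assms by (intro DERIV_divide DERIV_const) auto
  then have "(bessel0_second' has_real_derivative
      (bessel0' 1 u * - reduction_weight u + bessel0'' 1 u * reduction_integral u)
      - (0 * (u * bessel0 1 u) - 1 * (1 * bessel0 1 u + u * bessel0' 1 u)) / ((u * bessel0 1 u) * (u * bessel0 1 u)))
      (at u)"
    unfolding bessel0_second'_def [abs_def]
    by (intro DERIV_diff DERIV_mult' bessel0'_has_real_derivative reduction_integral_has_real_derivative assms)
  moreover have "(bessel0' 1 u * - reduction_weight u + bessel0'' 1 u * reduction_integral u)
      - (0 * (u * bessel0 1 u) - 1 * (1 * bessel0 1 u + u * bessel0' 1 u)) / ((u * bessel0 1 u) * (u * bessel0 1 u))
      = bessel0_second'' u"
    using G assms by (simp add: bessel0_second''_def reduction_weight_def field_simps power2_eq_square)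
  ultimately show ?thesis
    by simp
qed

lemma bessel0_second_ode:
  assumes "u > 0"
  shows "u * bessel0_second'' u + bessel0_second' u = bessel0_second u"
proof -
  have "u * bessel0_second'' u + bessel0_second' u = reduction_integral u * (u * bessel0'' 1 u + bessel0' 1 u)"
    using bessel0_one_ge_one [of u] assms
    by (simp add: bessel0_second''_def bessel0_second'_def field_simps power2_eq_square)
  then show ?thesis
    using bessel0_ode [of u 1] by (simp add: bessel0_second_def)
qed

lemma isCont_bessel0_second'': "u > 0 \<Longrightarrow> isCont bessel0_second'' u"
  unfolding bessel0_second''_def [abs_def]
  using bessel0_one_ge_one [of u] DERIV_isCont [OF reduction_integral_has_real_derivative, of u]
  by (intro continuous_intros isCont_bessel0'' isCont_bessel0) auto

lemma bessel0_second_pos: "u > 0 \<Longrightarrow> bessel0_second u > 0"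
  using bessel0_one_ge_one [of u] reduction_integral_pos [of u] by (simp add: bessel0_second_def)

lemma bessel0_second'_nonpos:
  assumes "u > 0"
  shows "bessel0_second' u \<le> 0"
proof -
  have "bessel0' 1 u > 0"
    using bessel0'_one_pos assms by simp
  then have "bessel0' 1 u * reduction_integral u \<le> bessel0' 1 u * (1 / (u * bessel0' 1 u * bessel0 1 u))"
    using reduction_integral_le [OF assms] by (intro mult_left_mono) auto
  also have "\<dots> = 1 / (u * bessel0 1 u)"
    using \<open>bessel0' 1 u > 0\<close> by simp
  finally show ?thesis
    by (simp add: bessel0_second'_def)
qed

section \<open>Radial variables and gluing\<close>

definition radial :: "(real \<Rightarrow> real) \<Rightarrow> real \<Rightarrow> real \<Rightarrow> real" where
  "radial g l r = g (l * r\<^sup>2)"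

definition radial' :: "(real \<Rightarrow> real) \<Rightarrow> real \<Rightarrow> real \<Rightarrow> real" where
  "radial' g' l r = 2 * l * r * g' (l * r\<^sup>2)"

definition radial'' :: "(real \<Rightarrow> real) \<Rightarrow> (real \<Rightarrow> real) \<Rightarrow> real \<Rightarrow> real \<Rightarrow> real" where
  "radial'' g' g'' l r = (2 * l * r)\<^sup>2 * g'' (l * r\<^sup>2) + 2 * l * g' (l * r\<^sup>2)"

lemma has_real_derivative_square_scaled: "((\<lambda>r. l * r\<^sup>2) has_real_derivative 2 * l * r) (at r)"
  by (auto intro!: derivative_eq_intros)

lemma radial_has_real_derivative:
  assumes "(g has_real_derivative g' (l * r\<^sup>2)) (at (l * r\<^sup>2))"
  shows "(radial g l has_real_derivative radial' g' l r) (at r)"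
  using DERIV_chain2 [OF assms has_real_derivative_square_scaled]
  unfolding radial_def [abs_def] radial'_def by (simp add: mult_ac)

lemma radial'_has_real_derivative:
  assumes "(g' has_real_derivative g'' (l * r\<^sup>2)) (at (l * r\<^sup>2))"
  shows "(radial' g' l has_real_derivative radial'' g' g'' l r) (at r)"
proof -
  have "((\<lambda>r. 2 * l * r * g' (l * r\<^sup>2)) has_real_derivative
      2 * l * r * (g'' (l * r\<^sup>2) * (2 * l * r)) + 2 * l * g' (l * r\<^sup>2)) (at r)"
    using DERIV_mult' [OF DERIV_cmult [OF DERIV_ident, of "2 * l"] DERIV_chain2 [OF assms has_real_derivative_square_scaled]]
    by simp
  then show ?thesis
    unfolding radial'_def [abs_def] radial''_def by (simp add: power2_eq_square mult_ac)
qed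

lemma radial_ode:
  assumes "r \<noteq> 0" and ode: "(l * r\<^sup>2) * g'' (l * r\<^sup>2) + g' (l * r\<^sup>2) = c * g (l * r\<^sup>2)"
  shows "radial'' g' g'' l r + radial' g' l r / r = 4 * l * c * radial g l r"
proof -
  have "radial'' g' g'' l r + radial' g' l r / r = 4 * l * ((l * r\<^sup>2) * g'' (l * r\<^sup>2) + g' (l * r\<^sup>2))"
    using assms(1) by (simp add: radial''_def radial'_def field_simps power2_eq_square)
  then show ?thesis
    unfolding ode by (simp add: radial_def)
qed

lemma isCont_radial'':
  assumes "isCont g' (l * r\<^sup>2)" "isCont g'' (l * r\<^sup>2)"
  shows "isCont (radial'' g' g'' l) r"
  unfolding radial''_def [abs_def]
  using isCont_o2 [where f = "\<lambda>r. l * r\<^sup>2" and a = r and g = g']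
    isCont_o2 [where f = "\<lambda>r. l * r\<^sup>2" and a = r and g = g''] assms
  by (auto intro!: continuous_intros)

lemma has_real_derivative_glue:
  fixes f g f' g' :: "real \<Rightarrow> real"
  assumes "\<And>x. x \<le> x0 \<Longrightarrow> (f has_real_derivative f' x) (at x)"
    and "\<And>x. x0 \<le> x \<Longrightarrow> (g has_real_derivative g' x) (at x)"
    and "f x0 = g x0" "f' x0 = g' x0"
  shows "((\<lambda>x. if x \<le> x0 then f x else g x) has_real_derivative (if x \<le> x0 then f' x else g' x)) (at x)"
proof -
  have "((\<lambda>x. if x \<in> {..x0} then f x else g x) has_vector_derivative
      (if x \<in> {..x0} then f' x else g' x)) (at x within UNIV)"
    by (rule has_vector_derivative_If_within_closures [where T = "{x0<..}"])
       (use assms in \<open>auto simp: has_real_derivative_iff_has_vector_derivative [symmetric]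
         intro: has_field_derivative_at_within\<close>)
  then show ?thesis
    by (simp add: has_real_derivative_iff_has_vector_derivative)
qed

lemma radial_bessel0_has_real_derivative:
  "(radial (bessel0 c) l has_real_derivative radial' (bessel0' c) l r) (at r)"
  by (rule radial_has_real_derivative) (rule bessel0_has_real_derivative)

lemma radial'_bessel0'_has_real_derivative:
  "(radial' (bessel0' c) l has_real_derivative radial'' (bessel0' c) (bessel0'' c) l r) (at r)"
  by (rule radial'_has_real_derivative) (rule bessel0'_has_real_derivative)

lemma radial_bessel0_second_has_real_derivative:
  "l > 0 \<Longrightarrow> r \<noteq> 0 \<Longrightarrow> (radial bessel0_second l has_real_derivative radial' bessel0_second' l r) (at r)"
  by (rule radial_has_real_derivative) (simp add: bessel0_second_has_real_derivative)

lemma radial'_bessel0_second'_has_real_derivative: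
  "l > 0 \<Longrightarrow> r \<noteq> 0 \<Longrightarrow>
    (radial' bessel0_second' l has_real_derivative radial'' bessel0_second' bessel0_second'' l r) (at r)"
  by (rule radial'_has_real_derivative) (simp add: bessel0_second'_has_real_derivative)

lemma radial_bessel0_minus_one_first_zero:
  assumes "l > 0"
  obtains y where "y > 0" "radial (bessel0 (-1)) l y < 0" "radial' (bessel0' (-1)) l y = 0"
    "\<And>r. 0 < r \<Longrightarrow> r < y \<Longrightarrow> radial' (bessel0' (-1)) l r < 0"
    "\<And>s t. 0 \<le> s \<Longrightarrow> s < t \<Longrightarrow> t \<le> y \<Longrightarrow> radial (bessel0 (-1)) l t < radial (bessel0 (-1)) l s"
proof -
  obtain u1 where "u1 > 0" and zero: "bessel0' (-1) u1 = 0"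
    and neg: "\<And>u. 0 \<le> u \<Longrightarrow> u < u1 \<Longrightarrow> bessel0' (-1) u < 0"
    using bessel0'_minus_one_first_zero by blast
  define y where "y = sqrt (u1 / l)"
  have "y > 0" and y_sq: "l * y\<^sup>2 = u1"
    using \<open>u1 > 0\<close> assms by (auto simp: y_def)
  have sq_less: "l * s\<^sup>2 < u1" if "0 \<le> s" "s < y" for s
    unfolding y_sq [symmetric] using that assms by (intro mult_strict_left_mono power_strict_mono) auto
  have sq_le: "l * s\<^sup>2 \<le> l * t\<^sup>2" if "0 \<le> s" "s \<le> t" for s t
    using that assms by (intro mult_left_mono power_mono) auto
  show ?thesis
  proof (rule that [OF \<open>y > 0\<close>])
    show "radial (bessel0 (-1)) l y < 0"
      unfolding radial_def y_sq by (rule bessel0_minus_one_neg_at_first_zero [OF \<open>u1 > 0\<close> zero neg])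
    show "radial' (bessel0' (-1)) l y = 0"
      unfolding radial'_def y_sq zero by simp
    show "radial' (bessel0' (-1)) l r < 0" if "0 < r" "r < y" for r
      unfolding radial'_def using neg [of "l * r\<^sup>2"] sq_less [of r] that assms
      by (simp add: mult_pos_neg)
    show "radial (bessel0 (-1)) l t < radial (bessel0 (-1)) l s" if "0 \<le> s" "s < t" "t \<le> y" for s t
      unfolding radial_def using that sq_le [of t y] y_sq sq_less [of s] assms
      by (intro bessel0_minus_one_strict_decreasing [OF neg]) (auto intro: mult_strict_left_mono power_strict_mono)
  qed
qed

lemma radial_bessel0_zero_between:
  assumes "y > 0" "radial (bessel0 c) l y < 0"
  obtains z where "0 < z" "z < y" "radial (bessel0 c) l z = 0"
proof -
  have "continuous_on {0..y} (radial (bessel0 c) l)"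
    by (intro continuous_at_imp_continuous_on ballI DERIV_isCont [OF radial_bessel0_has_real_derivative])
  then obtain z where "0 \<le> z" "z \<le> y" "radial (bessel0 c) l z = 0"
    using IVT2' [of "radial (bessel0 c) l" y 0 0] assms by (force simp: radial_def)
  with assms show ?thesis
    using that by (force simp: radial_def le_less)
qed

lemma radial_bessel0_second_pos: "l > 0 \<Longrightarrow> r \<noteq> 0 \<Longrightarrow> radial bessel0_second l r > 0"
  unfolding radial_def by (intro bessel0_second_pos) simp

lemma radial'_bessel0_second_nonpos: "l > 0 \<Longrightarrow> r > 0 \<Longrightarrow> radial' bessel0_second' l r \<le> 0"
  unfolding radial'_def using bessel0_second'_nonpos [of "l * r\<^sup>2"]
  by (simp add: mult_nonneg_nonpos)

section \<open>Matching the inner and the outer profile\<close>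

lemma bessel_matching_radius:
  fixes lJ lK \<gamma> :: real
  defines "J \<equiv> radial (bessel0 (-1)) lJ" and "J' \<equiv> radial' (bessel0' (-1)) lJ"
    and "K \<equiv> radial bessel0_second lK" and "K' \<equiv> radial' bessel0_second' lK"
  assumes "lJ > 0" "lK > 0" "\<gamma> > 0"
  obtains r0 where "r0 > 0" "J r0 < 0" "\<And>s t. 0 \<le> s \<Longrightarrow> s < t \<Longrightarrow> t \<le> r0 \<Longrightarrow> J t < J s"
    "J r0 * K' r0 + \<gamma> * J' r0 * K r0 = 0"
proof -
  obtain y where "y > 0" "J y < 0" "J' y = 0" and J'_neg: "\<And>r. 0 < r \<Longrightarrow> r < y \<Longrightarrow> J' r < 0"
    and J_decr: "\<And>s t. 0 \<le> s \<Longrightarrow> s < t \<Longrightarrow> t \<le> y \<Longrightarrow> J t < J s"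
    using radial_bessel0_minus_one_first_zero [OF \<open>lJ > 0\<close>] unfolding J_def J'_def by blast
  have J_cont: "isCont J r" and J'_cont: "isCont J' r" for r
    unfolding J_def J'_def
    by (rule DERIV_isCont radial_bessel0_has_real_derivative radial'_bessel0'_has_real_derivative)+
  obtain z where "0 < z" "z < y" "J z = 0"
    using radial_bessel0_zero_between \<open>y > 0\<close> \<open>J y < 0\<close> unfolding J_def by blast
  define F where "F r = J r * K' r + \<gamma> * J' r * K r" for r
  have "F z < 0"
    using \<open>J z = 0\<close> J'_neg [OF \<open>0 < z\<close> \<open>z < y\<close>] radial_bessel0_second_pos [of lK z] \<open>lK > 0\<close> \<open>\<gamma> > 0\<close>
      \<open>0 < z\<close>
    by (simp add: F_def K_def mult_pos_neg mult_neg_pos)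
  moreover have "F y \<ge> 0"
    using \<open>J' y = 0\<close> \<open>J y < 0\<close> radial'_bessel0_second_nonpos [OF \<open>lK > 0\<close> \<open>y > 0\<close>]
    by (simp add: F_def K'_def mult_nonpos_nonpos)
  moreover have "isCont K r" "isCont K' r" if "r > 0" for r
    unfolding K_def K'_def using that
      DERIV_isCont [OF radial_bessel0_second_has_real_derivative [OF \<open>lK > 0\<close>, of r]]
      DERIV_isCont [OF radial'_bessel0_second'_has_real_derivative [OF \<open>lK > 0\<close>, of r]]
    by simp_all
  then have "continuous_on {z..y} F"
    unfolding F_def using \<open>0 < z\<close> J_cont J'_cont
    by (intro continuous_at_imp_continuous_on ballI continuous_intros) auto
  ultimately obtain r0 where "z \<le> r0" "r0 \<le> y" "F r0 = 0"
    using IVT' [of F z 0 y] \<open>z < y\<close> by force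
  then have "z < r0"
    using \<open>F z < 0\<close> by (auto simp: le_less)
  show ?thesis
  proof (rule that)
    show "r0 > 0" "J r0 < 0"
      using \<open>0 < z\<close> \<open>z < r0\<close> J_decr [of z r0] \<open>J z = 0\<close> \<open>r0 \<le> y\<close> by auto
    show "J t < J s" if "0 \<le> s" "s < t" "t \<le> r0" for s t
      using J_decr that \<open>r0 \<le> y\<close> by simp
    show "J r0 * K' r0 + \<gamma> * J' r0 * K r0 = 0"
      using \<open>F r0 = 0\<close> by (simp add: F_def)
  qed
qed

section \<open>The half-bump profile\<close>

text \<open>
  Here \<open>\<kappa>\<close> stands for \<open>a \<chi> / (D \<epsilon>)\<close>, and \<open>J\<close>, \<open>K\<close> for \<open>J\<^sub>0 (\<omega> r)\<close>, \<open>K\<^sub>0 (\<beta> r)\<close>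
  with \<open>\<omega>\<^sup>2 = \<kappa> - \<beta>\<^sup>2\<close>. The potential \<open>phi\<close> is normalised to \<open>1\<close> at \<open>r0\<close>, and the density is
  \<open>\<chi> / \<epsilon> * excess\<close>.
\<close>

locale half_bump_profiles =
  fixes \<kappa> \<beta> r0 :: real and J J' J'' K K' K'' :: "real \<Rightarrow> real"
  assumes beta_pos: "\<beta> > 0" and beta_less: "\<beta>\<^sup>2 < \<kappa>" and r0_pos: "r0 > 0"
    and J_deriv: "\<And>r. (J has_real_derivative J' r) (at r)"
    and J'_deriv: "\<And>r. (J' has_real_derivative J'' r) (at r)"
    and J''_cont: "\<And>r. isCont J'' r"
    and J_ode: "\<And>r. r > 0 \<Longrightarrow> J'' r + J' r / r = - (\<kappa> - \<beta>\<^sup>2) * J r"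
    and J_decr: "\<And>s t. 0 \<le> s \<Longrightarrow> s < t \<Longrightarrow> t \<le> r0 \<Longrightarrow> J t < J s"
    and J_r0_neg: "J r0 < 0"
    and K_deriv: "\<And>r. r > 0 \<Longrightarrow> (K has_real_derivative K' r) (at r)"
    and K'_deriv: "\<And>r. r > 0 \<Longrightarrow> (K' has_real_derivative K'' r) (at r)"
    and K''_cont: "\<And>r. r > 0 \<Longrightarrow> isCont K'' r"
    and K_ode: "\<And>r. r > 0 \<Longrightarrow> K'' r + K' r / r = \<beta>\<^sup>2 * K r"
    and K_pos: "\<And>r. r > 0 \<Longrightarrow> K r > 0"
    and K'_nonpos: "\<And>r. r > 0 \<Longrightarrow> K' r \<le> 0"
    and matching: "J r0 * K' r0 + \<beta>\<^sup>2 / (\<kappa> - \<beta>\<^sup>2) * J' r0 * K r0 = 0"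
begin

definition amp_in :: real where "amp_in = - \<beta>\<^sup>2 / ((\<kappa> - \<beta>\<^sup>2) * J r0)"
definition amp_out :: real where "amp_out = 1 / K r0"

definition phi_in :: "real \<Rightarrow> real" where "phi_in r = amp_in * J r + \<kappa> / (\<kappa> - \<beta>\<^sup>2)"

definition phi :: "real \<Rightarrow> real" where "phi r = (if r \<le> r0 then phi_in r else amp_out * K r)"
definition phi' :: "real \<Rightarrow> real" where "phi' r = (if r \<le> r0 then amp_in * J' r else amp_out * K' r)"
definition phi'' :: "real \<Rightarrow> real" where "phi'' r = (if r \<le> r0 then amp_in * J'' r else amp_out * K'' r)"

definition excess :: "real \<Rightarrow> real" where "excess r = (if r \<le> r0 then phi_in r - 1 else 0)"

lemma omega_sq_pos: "\<kappa> - \<beta>\<^sup>2 > 0"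
  using beta_less by simp

lemma amp_in_pos: "amp_in > 0"
proof -
  have "(\<kappa> - \<beta>\<^sup>2) * J r0 < 0"
    using omega_sq_pos J_r0_neg by (rule mult_pos_neg)
  moreover have "- \<beta>\<^sup>2 < 0"
    using beta_pos by simp
  ultimately show ?thesis
    unfolding amp_in_def by (rule divide_neg_neg [rotated])
qed

lemma amp_out_pos: "amp_out > 0"
  using K_pos [OF r0_pos] by (simp add: amp_out_def)

lemma phi_in_r0: "phi_in r0 = 1"
proof -
  have "amp_in * J r0 = - \<beta>\<^sup>2 / (\<kappa> - \<beta>\<^sup>2)"
    using J_r0_neg by (simp add: amp_in_def)
  then have "phi_in r0 = \<kappa> / (\<kappa> - \<beta>\<^sup>2) - \<beta>\<^sup>2 / (\<kappa> - \<beta>\<^sup>2)"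
    by (simp add: phi_in_def)
  also have "\<dots> = 1"
    using omega_sq_pos by (simp flip: diff_divide_distrib)
  finally show ?thesis .
qed

lemma phi_out_r0: "amp_out * K r0 = 1"
  using K_pos [OF r0_pos] by (simp add: amp_out_def)

lemma phi_in_minus_one: "phi_in r - 1 = amp_in * (J r - J r0)"
  using phi_in_r0 by (simp add: phi_in_def algebra_simps)

lemma phi_in_gt_one: "0 \<le> r \<Longrightarrow> r < r0 \<Longrightarrow> phi_in r > 1"
  using mult_pos_pos [OF amp_in_pos, of "J r - J r0"] J_decr [of r r0] phi_in_minus_one [of r] by simp

lemma phi_in_le: "0 \<le> r \<Longrightarrow> r \<le> r0 \<Longrightarrow> phi_in r \<le> phi_in 0"
  using J_decr [of 0 r] amp_in_pos by (cases "r = 0") (auto simp: phi_in_def)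

lemma phi_in_ode: "r > 0 \<Longrightarrow> amp_in * J'' r + amp_in * J' r / r = \<kappa> - (\<kappa> - \<beta>\<^sup>2) * phi_in r"
proof -
  assume "r > 0"
  have "amp_in * J'' r + amp_in * J' r / r = amp_in * (J'' r + J' r / r)"
    by (simp add: algebra_simps)
  also have "\<dots> = - (\<kappa> - \<beta>\<^sup>2) * (phi_in r - \<kappa> / (\<kappa> - \<beta>\<^sup>2))"
    using J_ode [OF \<open>r > 0\<close>] by (simp add: phi_in_def)
  also have "\<dots> = \<kappa> - (\<kappa> - \<beta>\<^sup>2) * phi_in r"
    using omega_sq_pos by (simp add: field_simps)
  finally show ?thesis .
qed

lemma phi'_r0: "amp_in * J' r0 = amp_out * K' r0"
  using matching omega_sq_pos J_r0_neg K_pos [OF r0_pos]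
  by (simp add: amp_in_def amp_out_def field_simps)

lemma phi''_r0: "amp_in * J'' r0 = amp_out * K'' r0"
proof -
  have "amp_in * J'' r0 = \<beta>\<^sup>2 - amp_in * J' r0 / r0"
    using phi_in_ode [OF r0_pos] phi_in_r0 by simp
  moreover have "amp_out * K'' r0 = \<beta>\<^sup>2 * (amp_out * K r0) - amp_out * K' r0 / r0"
    using arg_cong [OF K_ode [OF r0_pos], of "(*) amp_out"] by (simp add: algebra_simps)
  ultimately show ?thesis
    using phi_out_r0 phi'_r0 by simp
qed

lemma phi_in_has_real_derivative: "(phi_in has_real_derivative amp_in * J' r) (at r)"
  unfolding phi_in_def [abs_def] by (auto intro!: derivative_eq_intros J_deriv)

lemma phi_has_real_derivative: "(phi has_real_derivative phi' r) (at r)"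
  unfolding phi_def [abs_def] phi'_def phi_in_def
  by (rule has_real_derivative_glue)
     (use J_deriv K_deriv r0_pos phi_in_r0 phi_out_r0 phi'_r0 in
       \<open>auto intro!: derivative_eq_intros simp: phi_in_def\<close>)

lemma phi'_has_real_derivative: "(phi' has_real_derivative phi'' r) (at r)"
  unfolding phi'_def [abs_def] phi''_def
  by (rule has_real_derivative_glue)
     (use J'_deriv K'_deriv r0_pos phi'_r0 phi''_r0 in \<open>auto intro!: derivative_eq_intros\<close>)

lemma continuous_on_phi'': "continuous_on S phi''"
proof -
  have "continuous_on UNIV phi''"
    unfolding phi''_def [abs_def]
    by (rule continuous_on_cases_le [where h = "\<lambda>r. r", simplified])
       (use J''_cont K''_cont r0_pos phi''_r0 in
         \<open>auto intro!: continuous_at_imp_continuous_on continuous_intros\<close>)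
  then show ?thesis
    by (rule continuous_on_subset) simp
qed

lemma continuous_on_excess: "continuous_on S excess"
proof -
  have "continuous_on UNIV excess"
    unfolding excess_def [abs_def]
    by (rule continuous_on_cases_le [where h = "\<lambda>r. r", simplified])
       (use phi_in_r0 DERIV_isCont [OF phi_in_has_real_derivative] in
         \<open>auto intro!: continuous_at_imp_continuous_on continuous_intros\<close>)
  then show ?thesis
    by (rule continuous_on_subset) simp
qed

lemma excess_pos: "0 \<le> r \<Longrightarrow> r < r0 \<Longrightarrow> excess r > 0"
  using phi_in_gt_one by (simp add: excess_def)

lemma excess_eq_0: "r0 \<le> r \<Longrightarrow> excess r = 0"
  using phi_in_r0 by (simp add: excess_def)

lemma excess_nonneg: "0 \<le> r \<Longrightarrow> excess r \<ge> 0"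
  using excess_pos [of r] excess_eq_0 [of r] by (cases "r < r0") auto

lemma phi_out_le_one:
  assumes "r0 \<le> r"
  shows "amp_out * K r \<le> 1"
proof -
  have "K r \<le> K r0"
  proof (rule DERIV_nonpos_imp_nonincreasing [OF assms])
    fix s assume "r0 \<le> s"
    then have "s > 0"
      using r0_pos by simp
    then show "\<exists>y. (K has_real_derivative y) (at s) \<and> y \<le> 0"
      using K_deriv K'_nonpos by blast
  qed
  then show ?thesis
    using amp_out_pos phi_out_r0 by (metis mult_left_mono less_imp_le)
qed

lemma phi_nonneg: "0 \<le> r \<Longrightarrow> phi r \<ge> 0"
  using phi_in_gt_one [of r] phi_in_r0 amp_out_pos K_pos [of r] r0_pos
  by (auto simp: phi_def le_less)

lemma phi_bounded: "bounded (phi ` {0..})"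
proof -
  have "\<bar>phi r\<bar> \<le> max (phi_in 0) 1" if "0 \<le> r" for r
    using that phi_nonneg [OF that] phi_in_le [OF that] phi_out_le_one [of r]
    by (auto simp: phi_def)
  then show ?thesis
    unfolding bounded_iff by auto
qed

lemma excess_sq_has_real_derivative:
  "((\<lambda>s. (excess s)\<^sup>2 / 2) has_real_derivative excess r * phi' r) (at r)"
proof -
  have "((\<lambda>s. (phi_in s - 1)\<^sup>2 / 2) has_real_derivative (phi_in s - 1) * (amp_in * J' s)) (at s)" for s
    by (auto intro!: derivative_eq_intros phi_in_has_real_derivative)
  then have "((\<lambda>s. if s \<le> r0 then (phi_in s - 1)\<^sup>2 / 2 else 0) has_real_derivative
      (if r \<le> r0 then (phi_in r - 1) * (amp_in * J' r) else 0)) (at r)"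
    by (intro has_real_derivative_glue) (auto simp: phi_in_r0)
  moreover have "(\<lambda>s. (excess s)\<^sup>2 / 2) = (\<lambda>s. if s \<le> r0 then (phi_in s - 1)\<^sup>2 / 2 else 0)"
    by (auto simp: excess_def)
  moreover have "excess r * phi' r = (if r \<le> r0 then (phi_in r - 1) * (amp_in * J' r) else 0)"
    by (simp add: excess_def phi'_def)
  ultimately show ?thesis
    by simp
qed

lemma phi_ode:
  assumes "r > 0"
  shows "phi'' r + phi' r / r + \<kappa> * excess r - \<beta>\<^sup>2 * phi r = 0"
proof (cases "r \<le> r0")
  case True
  then show ?thesis
    using phi_in_ode [OF assms] by (simp add: phi''_def phi'_def phi_def excess_def algebra_simps)
next
  case False
  then show ?thesis
    using arg_cong [OF K_ode [OF assms], of "(*) amp_out"]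
    by (simp add: phi''_def phi'_def phi_def excess_def algebra_simps)
qed

lemma pressure_has_real_derivative:
  assumes "\<epsilon> \<noteq> 0"
  shows "((\<lambda>s. \<epsilon> / 2 * (c / \<epsilon> * excess s)\<^sup>2) has_real_derivative c * (c / \<epsilon> * excess r) * phi' r) (at r)"
proof -
  have "(\<lambda>s. \<epsilon> / 2 * (c / \<epsilon> * excess s)\<^sup>2) = (\<lambda>s. c\<^sup>2 / \<epsilon> * ((excess s)\<^sup>2 / 2))"
    using assms by (simp add: fun_eq_iff power2_eq_square mult_ac)
  moreover have "c * (c / \<epsilon> * excess r) * phi' r = c\<^sup>2 / \<epsilon> * (excess r * phi' r)"
    by (simp add: power2_eq_square)
  ultimately show ?thesis
    by (simp only:) (intro DERIV_cmult excess_sq_has_real_derivative)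
qed

lemma chemoattractant_ode:
  assumes "r > 0" "\<kappa> = a * c / (D * \<epsilon>)" "D \<noteq> 0" "\<epsilon> \<noteq> 0"
  shows "D * phi'' r + D * phi' r / r + a * (c / \<epsilon> * excess r) - D * \<beta>\<^sup>2 * phi r = 0"
proof -
  have "a * (c / \<epsilon> * excess r) = D * \<kappa> * excess r"
    using assms(2-4) by simp
  with arg_cong [OF phi_ode [OF assms(1)], of "(*) D"] show ?thesis
    by (simp add: algebra_simps)
qed

end

lemma half_bump_profiles_exist:
  assumes "\<beta> > 0" "\<beta>\<^sup>2 < \<kappa>"
  shows "\<exists>r0 J J' J'' K K' K''. half_bump_profiles \<kappa> \<beta> r0 J J' J'' K K' K''"
proof -
  define lJ where "lJ = (\<kappa> - \<beta>\<^sup>2) / 4"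
  define lK where "lK = \<beta>\<^sup>2 / 4"
  have "lJ > 0" "lK > 0" "\<beta>\<^sup>2 / (\<kappa> - \<beta>\<^sup>2) > 0"
    using assms by (simp_all add: lJ_def lK_def)
  then obtain r0 where "r0 > 0" and matching:
      "radial (bessel0 (-1)) lJ r0 < 0"
      "\<And>s t. 0 \<le> s \<Longrightarrow> s < t \<Longrightarrow> t \<le> r0 \<Longrightarrow> radial (bessel0 (-1)) lJ t < radial (bessel0 (-1)) lJ s"
      "radial (bessel0 (-1)) lJ r0 * radial' bessel0_second' lK r0
        + \<beta>\<^sup>2 / (\<kappa> - \<beta>\<^sup>2) * radial' (bessel0' (-1)) lJ r0 * radial bessel0_second lK r0 = 0"
    using bessel_matching_radius by blast
  have "half_bump_profiles \<kappa> \<beta> r0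
      (radial (bessel0 (-1)) lJ) (radial' (bessel0' (-1)) lJ) (radial'' (bessel0' (-1)) (bessel0'' (-1)) lJ)
      (radial bessel0_second lK) (radial' bessel0_second' lK) (radial'' bessel0_second' bessel0_second'' lK)"
  proof (unfold_locales; (intro matching assms \<open>r0 > 0\<close> radial_bessel0_has_real_derivative
        radial'_bessel0'_has_real_derivative radial_bessel0_second_has_real_derivative
        radial'_bessel0_second'_has_real_derivative radial_bessel0_second_pos radial'_bessel0_second_nonpos
        \<open>lK > 0\<close>)?)
    show "isCont (radial'' (bessel0' (-1)) (bessel0'' (-1)) lJ) r" for r
      by (intro isCont_radial'' isCont_bessel0' isCont_bessel0'')
    show "isCont (radial'' bessel0_second' bessel0_second'' lK) r" if "r > 0" for r
      using \<open>lK > 0\<close> that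
      by (intro isCont_radial'' DERIV_isCont [OF bessel0_second'_has_real_derivative] isCont_bessel0_second'') simp_all
    show "radial'' (bessel0' (-1)) (bessel0'' (-1)) lJ r + radial' (bessel0' (-1)) lJ r / r
        = - (\<kappa> - \<beta>\<^sup>2) * radial (bessel0 (-1)) lJ r" if "r > 0" for r
      using radial_ode [where g = "bessel0 (-1)" and g' = "bessel0' (-1)" and g'' = "bessel0'' (-1)" and c = "-1", OF _ bessel0_ode] that
      by (simp add: lJ_def field_simps)
    show "radial'' bessel0_second' bessel0_second'' lK r + radial' bessel0_second' lK r / r
        = \<beta>\<^sup>2 * radial bessel0_second lK r" if "r > 0" for r
    proof -
      have "lK * r\<^sup>2 * bessel0_second'' (lK * r\<^sup>2) + bessel0_second' (lK * r\<^sup>2) = 1 * bessel0_second (lK * r\<^sup>2)"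
        using bessel0_second_ode \<open>lK > 0\<close> that by simp
      from radial_ode [where g = bessel0_second and g' = bessel0_second' and g'' = bessel0_second'', OF _ this] that
      show ?thesis
        by (simp add: lK_def)
    qed
  qed (simp_all)
  then show ?thesis
    by blast
qed

theorem mainTheorem1:
  fixes D chi \<epsilon> a \<beta> b :: real
  assumes "D > 0" and "chi > 0" and "\<epsilon> > 0" and "a > 0" and "\<beta> > 0"
    and "b = D * \<beta>\<^sup>2"
    and "a * chi / (D * \<epsilon>) - \<beta>\<^sup>2 > 0"
  shows "\<exists>\<rho>0 \<phi>0 r0 (\<rho>::real \<Rightarrow> real) (\<phi>::real \<Rightarrow> real) \<phi>' \<phi>'' dp.
     \<rho>0 > 0 \<and> \<phi>0 > 0 \<and> r0 > 0 \<and>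
     continuous_on {0..} \<rho> \<and>
     (\<forall>r\<ge>0. (\<phi> has_real_derivative \<phi>' r) (at r within {0..})) \<and>
     (\<forall>r\<ge>0. (\<phi>' has_real_derivative \<phi>'' r) (at r within {0..})) \<and>
     continuous_on {0..} \<phi>'' \<and>
     (\<forall>r\<ge>0. \<rho> r \<ge> 0) \<and> (\<forall>r\<ge>0. \<phi> r \<ge> 0) \<and>
     bounded (\<phi> ` {0..}) \<and>
     (\<forall>r>0. ((\<lambda>s. \<epsilon> / 2 * (\<rho> s)\<^sup>2) has_real_derivative dp r) (at r)) \<and>
     (\<forall>r>0. dp r = chi * \<rho> r * \<phi>' r) \<and>
     (\<forall>r>0. D * \<phi>'' r + D * \<phi>' r / r + a * \<rho> r - b * \<phi> r = 0) \<and>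
     \<rho> 0 = \<rho>0 \<and> \<phi> 0 = \<phi>0 \<and>
     (\<forall>r. 0 \<le> r \<and> r < r0 \<longrightarrow> \<rho> r > 0) \<and>
     (\<forall>r\<ge>r0. \<rho> r = 0)"
proof -
  define \<kappa> where "\<kappa> = a * chi / (D * \<epsilon>)"
  obtain r0 J J' J'' K K' K'' where "half_bump_profiles \<kappa> \<beta> r0 J J' J'' K K' K''"
    using half_bump_profiles_exist [of \<beta> \<kappa>] assms(5,7) by (auto simp: \<kappa>_def)
  then interpret half_bump_profiles \<kappa> \<beta> r0 J J' J'' K K' K'' .
  have density: "\<forall>r\<ge>0. chi / \<epsilon> * excess r \<ge> 0" "\<forall>r. 0 \<le> r \<and> r < r0 \<longrightarrow> chi / \<epsilon> * excess r > 0"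
    using excess_nonneg excess_pos assms(2,3) by simp_all
  have "continuous_on {0..} (\<lambda>r. chi / \<epsilon> * excess r)"
    by (intro continuous_intros continuous_on_excess)
  have "phi 0 > 0"
    using phi_in_gt_one [of 0] r0_pos by (simp add: phi_def)
  show ?thesis
    by (rule exI [of _ "chi / \<epsilon> * excess 0"], rule exI [of _ "phi 0"], rule exI [of _ r0],
        rule exI [of _ "\<lambda>r. chi / \<epsilon> * excess r"], rule exI [of _ phi], rule exI [of _ phi'], rule exI [of _ phi''],
        rule exI [of _ "\<lambda>r. chi * (chi / \<epsilon> * excess r) * phi' r"])
       (use density \<open>continuous_on {0..} (\<lambda>r. chi / \<epsilon> * excess r)\<close> \<open>phi 0 > 0\<close> r0_pos excess_eq_0
         phi_nonneg phi_bounded continuous_on_phi'' pressure_has_real_derivative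
         chemoattractant_ode [OF _ \<kappa>_def] assms(1,3,6) phi_has_real_derivative phi'_has_real_derivative
         in \<open>auto intro: has_field_derivative_at_within\<close>)
qed

end
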